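(* Let $q$ be a prime power and $n=q^4-1$. (i) If $0\le a_2<q-1$, $0\le a_3<q$ and $a_2+a_3\ge q-1$, then the interlude $[(a_2,a_3,a_2,a_3),(a_2+1,a_3,a_2+1,a_3)]_M$ contains exactly $q^2-qa_3-a_2-1$ minimal representatives of SR-asymmetric cosets of cardinality $2$. (ii) If $0\le a_3\le q-2$, then the interlude $[(q-1,a_3,q-1,a_3),(0,a_3+1,0,a_3+1)]_M$ contains exactly $q^2-qa_3-(q-1)-1$ minimal representatives of SR-asymmetric cosets of cardinality $2$. Moreover, in both cases every cyclotomic coset generated by an element of the interlude is an SR-asymmetric coset.
   Context: Identify $\mathbb{Z}_n$ with $\{0,\ldots,n-1\}$, all arithmetic modulo $n$. The $q$-adic 4-tuple $(a_0,a_1,a_2,a_3)$ denotes $a_0+a_1q+a_2q^2+a_3q^3$ with $0\le a_i<q$. The cyclotomic coset of $x$ with respect to $q^2$ is $I_x=\{x,\,q^2x\bmod n\}$; its minimal representative is its least element. The (Hermitian) reciprocal coset of $I_x$ is $I_{n-qx}$. $I_x$ is symmetric if $I_{n-qx}=I_x$ and asymmetric otherwise; for an asymmetric pair with minimal representatives $x<y$, $I_x$ is FR-asymmetric and $I_y$ is SR-asymmetric. For $0\le a<q-1$, $0\le b<q$, the interlude $[(a,b,a,b),(a+1,b,a+1,b)]_M$ is the set of integers $x$ with $(a,b,a,b)<x<(a+1,b,a+1,b)$ that are minimal representatives of a coset of cardinality $2$; for $0\le b\le q-2$, $[(q-1,b,q-1,b),(0,b+1,0,b+1)]_M$ is the set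 of integers $x$ with $(q-1,b,q-1,b)<x<(0,b+1,0,b+1)$ and $x<q^2x\bmod n$. *)

theory Defs
  imports "HOL-Computational_Algebra.Primes"
begin

definition prime_power :: "nat \<Rightarrow> bool" where
  "prime_power q \<longleftrightarrow> (\<exists>p k. prime p \<and> k \<ge> 1 \<and> q = p ^ k)"

definition qadic :: "nat \<Rightarrow> nat \<Rightarrow> nat \<Rightarrow> nat \<Rightarrow> nat \<Rightarrow> nat" where
  "qadic q a0 a1 a2 a3 = a0 + a1 * q + a2 * q^2 + a3 * q^3"

definition cyc_coset :: "nat \<Rightarrow> nat \<Rightarrow> nat \<Rightarrow> nat set" where
  "cyc_coset n q x = {x, (q^2 * x) mod n}"

definition recip_gen :: "nat \<Rightarrow> nat \<Rightarrow> nat \<Rightarrow> nat" where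
  "recip_gen n q x = (n - (q * x) mod n) mod n"

definition symmetric_coset :: "nat \<Rightarrow> nat \<Rightarrow> nat \<Rightarrow> bool" where
  "symmetric_coset n q x \<longleftrightarrow> cyc_coset n q (recip_gen n q x) = cyc_coset n q x"

definition SR_asymmetric :: "nat \<Rightarrow> nat \<Rightarrow> nat \<Rightarrow> bool" where
  "SR_asymmetric n q x \<longleftrightarrow> \<not> symmetric_coset n q x \<and>
     Min (cyc_coset n q (recip_gen n q x)) < Min (cyc_coset n q x)"

definition interlude1 :: "nat \<Rightarrow> nat \<Rightarrow> nat \<Rightarrow> nat \<Rightarrow> nat set" where
  "interlude1 n q a b = {x. qadic q a b a b < x \<and> x < qadic q (a+1) b (a+1) b \<and>
      Min (cyc_coset n q x) = x \<and> card (cyc_coset n q x) = 2}"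

definition interlude2 :: "nat \<Rightarrow> nat \<Rightarrow> nat \<Rightarrow> nat set" where
  "interlude2 n q b = {x. qadic q (q-1) b (q-1) b < x \<and> x < qadic q 0 (b+1) 0 (b+1) \<and>
      x < (q^2 * x) mod n}"

end

theory Submission
  imports Defs
begin

(* Put Q = q^2, so n = Q^2 - 1. Multiplication by Q modulo n swaps the two base-Q digits of
   x = L + Q*H, and multiplication by q rotates its four base-q digits. Hence the elements of
   the interlude after the palindrome (a2,a3,a2,a3) that are minimal in their coset are exactly
   the x = L + Q*A with A = a2 + a3*q < L < Q, and there are Q - 1 - A of them; the second
   interlude is the case a2 = q - 1. For such x we get q*x mod n = y := a3 + q*(L + Q*a2), so
   the reciprocal coset contains n - y, and n - y < x because, using L > A and a2 + a3 >= q - 1,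
     x + y >= (1 + q)((1 + q^2)(a2 + a3) + 1) >= q^4 + q. *)

lemma mult_rotate_mod:
  fixes b c L H :: nat
  assumes "1 \<le> c * b"
  shows "(c * (L + b * H)) mod (c * b - 1) = (H + c * L) mod (c * b - 1)"
proof -
  obtain m where "c * b = Suc m"
    using assms not0_implies_Suc by fastforce
  then have "c * (L + b * H) = (H + c * L) + (c * b - 1) * H"
    by (simp add: algebra_simps mult.assoc[symmetric])
  then show ?thesis by simp
qed

lemma digits_le_max:
  fixes b c L H :: nat
  assumes "L < b" "H < c"
  shows "L + b * H \<le> c * b - 1"
proof -
  have "L + b * H < b * (H + 1)" using assms(1) by simp
  also have "\<dots> \<le> b * c" using assms(2) by (intro mult_le_mono2) simp
  finally show ?thesis by (simp add: mult.commute)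
qed

lemma digits_eq_max_iff:
  fixes b c L H :: nat
  assumes "L < b" "H < c"
  shows "L + b * H = c * b - 1 \<longleftrightarrow> L = b - 1 \<and> H = c - 1"
proof
  assume max: "L + b * H = c * b - 1"
  have "b * H \<le> b * (c - 1)" using assms(2) by (intro mult_le_mono2) simp
  moreover have "b * (c - 1) + (b - 1) = c * b - 1"
    using assms by (simp add: algebra_simps diff_mult_distrib2)
  ultimately have "L = b - 1" and "b * H = b * (c - 1)"
    using max assms(1) by linarith+
  then show "L = b - 1 \<and> H = c - 1" using assms(1) by simp
next
  assume "L = b - 1 \<and> H = c - 1"
  then show "L + b * H = c * b - 1"
    using assms by (simp add: algebra_simps diff_mult_distrib2)
qed

lemma digits_less_max_iff:
  fixes b c L H :: nat
  assumes "L < b" "H < c"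
  shows "L + b * H < c * b - 1 \<longleftrightarrow> L \<noteq> b - 1 \<or> H \<noteq> c - 1"
  using digits_le_max[OF assms] digits_eq_max_iff[OF assms] by linarith

lemma rotate_digits_less:
  fixes b c L H :: nat
  assumes "L < b" "H < c" "L + b * H < c * b - 1"
  shows "H + c * L < c * b - 1"
proof -
  have "L \<noteq> b - 1 \<or> H \<noteq> c - 1" using digits_less_max_iff[OF assms(1,2)] assms(3) by simp
  then have "H + c * L < b * c - 1" using digits_less_max_iff[OF assms(2,1)] by argo
  then show ?thesis by (simp add: mult.commute)
qed

lemma add_mult_less_swap_iff:
  fixes Q L H :: nat
  assumes "2 \<le> Q"
  shows "L + Q * H < H + Q * L \<longleftrightarrow> H < L"
proof
  assume lt: "L + Q * H < H + Q * L"
  show "H < L"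
  proof (rule ccontr)
    assume "\<not> H < L"
    then obtain d where "H = L + d" by (auto simp: not_less le_iff_add)
    moreover have "d \<le> Q * d" using assms by simp
    ultimately show False using lt by (simp add: distrib_left)
  qed
next
  assume "H < L"
  then obtain d where "L = H + Suc d" by (auto simp: less_iff_Suc_add)
  moreover have "2 * Suc d \<le> Q * Suc d" using assms by (intro mult_le_mono1)
  ultimately show "L + Q * H < H + Q * L" by (simp add: distrib_left)
qed

(* A + Q*A is the q-adic palindrome (a, b, a, b) when Q = q^2 and A = a + b*q, and the last
   condition says that x is the minimal representative of a coset of cardinality 2. *)
definition between_palindromes :: "nat \<Rightarrow> nat \<Rightarrow> nat \<Rightarrow> nat set" where
  "between_palindromes n Q A =
     {x. A + Q * A < x \<and> x < (A + 1) + Q * (A + 1) \<and> x < (Q * x) mod n}"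

lemma qadic_palindrome: "qadic q a b a b = (a + b * q) + q^2 * (a + b * q)"
  unfolding qadic_def by (simp add: algebra_simps power2_eq_square power3_eq_cube)

lemma interlude1_eq_between_palindromes:
  "interlude1 n q a b = between_palindromes n (q^2) (a + b * q)"
proof -
  have "Min (cyc_coset n q x) = x \<and> card (cyc_coset n q x) = 2 \<longleftrightarrow> x < (q^2 * x) mod n"
    for x
    unfolding cyc_coset_def by (cases "x = (q^2 * x) mod n") (auto simp: min_def)
  moreover have "qadic q (a + 1) b (a + 1) b = (a + b * q + 1) + q^2 * (a + b * q + 1)"
    using qadic_palindrome[of q "a + 1" b] by simp
  ultimately show ?thesis
    unfolding interlude1_def between_palindromes_def qadic_palindrome by simp
qed

lemma interlude2_eq_between_palindromes:
  assumes "1 \<le> q"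
  shows "interlude2 n q b = between_palindromes n (q^2) ((q - 1) + b * q)"
proof -
  have top: "(q - 1) + b * q + 1 = 0 + (b + 1) * q" using assms by simp
  show ?thesis
    unfolding interlude2_def between_palindromes_def qadic_palindrome top by simp
qed

lemma high_digit_between_palindromes:
  fixes Q A L H :: nat
  assumes "A + Q * A < L + Q * H" "L + Q * H < (A + 1) + Q * (A + 1)" "L < Q" "H < L"
  shows "H = A"
proof (rule ccontr)
  assume "H \<noteq> A"
  then consider "H + 1 \<le> A" | "A + 1 \<le> H" by linarith
  then show False
  proof cases
    case 1
    then have "Q * (H + 1) \<le> Q * A" by (intro mult_le_mono2)
    then show False using assms(1,3) by simp
  next
    case 2
    then have "Q * (A + 1) \<le> Q * H" by (intro mult_le_mono2)
    then show False using assms(2,4) 2 by linarith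
  qed
qed

lemma between_palindromes_eq_image:
  fixes n Q A :: nat
  assumes n: "n = Q * Q - 1" and A: "A + 1 < Q"
  shows "between_palindromes n Q A = (\<lambda>L. L + Q * A) ` {A<..<Q}"
proof (intro equalityI subsetI)
  fix x assume "x \<in> between_palindromes n Q A"
  then have lower: "A + Q * A < x" and upper: "x < (A + 1) + Q * (A + 1)"
    and rot: "x < (Q * x) mod n"
    unfolding between_palindromes_def by auto
  define L H where "L = x mod Q" and "H = x div Q"
  have x: "x = L + Q * H" and "L < Q" using A by (auto simp: L_def H_def)
  have "(Q * x) mod n \<le> H + Q * L"
    using mult_rotate_mod[of Q Q L H] A unfolding n x by simp
  then have "H < L" using rot x add_mult_less_swap_iff[of Q L H] A by simp
  have "H = A"
    using high_digit_between_palindromes[of A Q L H] lower upper \<open>L < Q\<close> \<open>H < L\<close>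
    unfolding x by blast
  then show "x \<in> (\<lambda>L. L + Q * A) ` {A<..<Q}"
    using x \<open>H < L\<close> \<open>L < Q\<close> by auto
next
  fix x assume "x \<in> (\<lambda>L. L + Q * A) ` {A<..<Q}"
  then obtain L where "A < L" "L < Q" and x: "x = L + Q * A" by auto
  have "A + Q * L < n"
    using digits_less_max_iff[of A Q L Q] \<open>L < Q\<close> A unfolding n by simp
  then have "(Q * x) mod n = A + Q * L"
    using mult_rotate_mod[of Q Q L A] \<open>L < Q\<close> unfolding n x by simp
  moreover have "L + Q * A < A + Q * L"
    using add_mult_less_swap_iff[of Q L A] \<open>A < L\<close> A by simp
  ultimately show "x \<in> between_palindromes n Q A"
    unfolding between_palindromes_def using x \<open>A < L\<close> \<open>L < Q\<close> by simp
qed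

lemma SR_asymmetricI:
  assumes "recip_gen n q x < Min (cyc_coset n q x)"
  shows "SR_asymmetric n q x"
proof -
  have "Min (cyc_coset n q (recip_gen n q x)) \<le> recip_gen n q x"
    unfolding cyc_coset_def by simp
  then have "Min (cyc_coset n q (recip_gen n q x)) < Min (cyc_coset n q x)"
    using assms by linarith
  then show ?thesis unfolding SR_asymmetric_def symmetric_coset_def by auto
qed

lemma palindrome_rotation_sum_gt:
  fixes q a2 a3 L :: nat
  assumes "1 \<le> q" "q - 1 \<le> a2 + a3" "a2 + a3 * q < L"
  shows "q^4 - 1 < (L + q^2 * (a2 + a3 * q)) + (a3 + q * (L + q^2 * a2))"
proof -
  obtain p where q: "q = Suc p" using assms(1) by (cases q) auto
  define s where "s = a2 + a3"
  have Lb: "(1 + q) * (a2 + a3 * q + 1) \<le> (1 + q) * L"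
    using assms(3) by (intro mult_le_mono2) simp
  have "q^4 - 1 < q^4 + q" using assms(1) by simp
  also have "\<dots> = (1 + q) * ((1 + q^2) * p + 1)"
    unfolding q by (simp add: algebra_simps power2_eq_square power4_eq_xxxx)
  also have "\<dots> \<le> (1 + q) * ((1 + q^2) * s + 1)"
    using assms(2) unfolding q s_def by (intro mult_le_mono2 add_le_mono1) simp
  also have "\<dots> = (1 + q) * (a2 + a3 * q + 1) + q^3 * s + q^2 * a2 + a3"
    unfolding s_def by (simp add: algebra_simps power2_eq_square power3_eq_cube)
  also have "\<dots> \<le> (1 + q) * L + q^3 * s + q^2 * a2 + a3"
    using Lb by linarith
  also have "\<dots> = (L + q^2 * (a2 + a3 * q)) + (a3 + q * (L + q^2 * a2))"
    unfolding s_def by (simp add: algebra_simps power2_eq_square power3_eq_cube)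
  finally show ?thesis .
qed

lemma recip_gen_less_between_palindromes:
  fixes q n a2 a3 L :: nat
  assumes q: "2 \<le> q" and n: "n = q^4 - 1" and "a2 < q" "a3 < q" "q - 1 \<le> a2 + a3"
    and L: "a2 + a3 * q < L" "L < q^2"
  shows "recip_gen n q (L + q^2 * (a2 + a3 * q)) < L + q^2 * (a2 + a3 * q)"
proof -
  define x where "x = L + q^2 * (a2 + a3 * q)"
  define t where "t = L + q^2 * a2"
  define y where "y = a3 + q * t"
  have "x < n"
    using digits_less_max_iff[of L "q^2" "a2 + a3 * q" "q^2"] L
    unfolding x_def n by (simp flip: power_add)
  have x_rot: "x = t + q^3 * a3"
    unfolding x_def t_def by (simp add: algebra_simps power2_eq_square power3_eq_cube)
  have n_cube: "n = q * q^3 - 1" using n by (simp flip: power_Suc)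
  have "t \<le> q * q^2 - 1"
    using digits_le_max[of L "q^2" a2 q] L(2) \<open>a2 < q\<close> unfolding t_def by simp
  moreover have "q * q^2 = q^3" by (simp flip: power_Suc)
  moreover have "0 < q^3" using q by simp
  ultimately have "t < q^3" by linarith
  then have "y < n"
    using rotate_digits_less[of t "q^3" a3 q] \<open>a3 < q\<close> \<open>x < n\<close>
    unfolding n_cube x_rot y_def by simp
  then have qx: "(q * x) mod n = y"
    using mult_rotate_mod[of q "q^3" t a3] q unfolding n_cube x_rot y_def by simp
  have "0 < y" using L(1) q unfolding y_def t_def by simp
  then have "recip_gen n q x = n - y"
    unfolding recip_gen_def qx using \<open>y < n\<close> by simp
  moreover have "n < x + y"
    using palindrome_rotation_sum_gt[of q a2 a3 L] q assms(5) L(1)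
    unfolding n x_def y_def t_def by simp
  ultimately show ?thesis using \<open>y < n\<close> unfolding x_def by arith
qed

lemma between_palindromes_SR_asymmetric:
  fixes q n a2 a3 :: nat
  assumes q: "2 \<le> q" and n: "n = q^4 - 1" and "a2 < q" "a3 < q" "q - 1 \<le> a2 + a3"
    and not_max: "a2 < q - 1 \<or> a3 < q - 1"
  shows "\<forall>x \<in> between_palindromes n (q^2) (a2 + a3 * q). SR_asymmetric n q x"
    and "int (card {x \<in> between_palindromes n (q^2) (a2 + a3 * q). SR_asymmetric n q x})
           = int q ^ 2 - int q * int a3 - int a2 - 1"
proof -
  define A where "A = a2 + a3 * q"
  have "A < q * q - 1"
    using digits_less_max_iff[of a2 q a3 q] \<open>a2 < q\<close> \<open>a3 < q\<close> not_max
    unfolding A_def by (auto simp: mult.commute)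
  then have "A + 1 < q^2" by (simp add: power2_eq_square)
  have "n = q^2 * q^2 - 1" using n by (simp flip: power_add)
  then have image: "between_palindromes n (q^2) A = (\<lambda>L. L + q^2 * A) ` {A<..<q^2}"
    using between_palindromes_eq_image \<open>A + 1 < q^2\<close> by blast
  show all: "\<forall>x \<in> between_palindromes n (q^2) (a2 + a3 * q). SR_asymmetric n q x"
    unfolding A_def[symmetric]
  proof
    fix x assume x: "x \<in> between_palindromes n (q^2) A"
    then have "Min (cyc_coset n q x) = x"
      unfolding between_palindromes_def cyc_coset_def by auto
    moreover obtain L where "A < L" "L < q^2" "x = L + q^2 * A" using x image by auto
    ultimately show "SR_asymmetric n q x"
      using recip_gen_less_between_palindromes[OF assms(1-5)] SR_asymmetricI
      unfolding A_def by metis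
  qed
  have "inj_on (\<lambda>L. L + q^2 * A) {A<..<q^2}" by (rule inj_onI) simp
  then have "card (between_palindromes n (q^2) A) = q^2 - 1 - A"
    unfolding image by (simp add: card_image)
  moreover have "{x \<in> between_palindromes n (q^2) A. SR_asymmetric n q x}
      = between_palindromes n (q^2) A"
    using all unfolding A_def by blast
  ultimately show "int (card {x \<in> between_palindromes n (q^2) (a2 + a3 * q). SR_asymmetric n q x})
      = int q ^ 2 - int q * int a3 - int a2 - 1"
    using \<open>A + 1 < q^2\<close> unfolding A_def by (simp add: of_nat_diff algebra_simps)
qed

lemma prime_power_ge_2:
  assumes "prime_power q"
  shows "2 \<le> q"
proof -
  obtain p k where "prime p" "1 \<le> k" "q = p ^ k"
    using assms unfolding prime_power_def by blast
  then show ?thesis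
    using self_le_power[of p k] prime_ge_2_nat[of p] by simp
qed

theorem mainTheorem16:
  fixes q n :: nat
  assumes "prime_power q"
    and "n = q ^ 4 - 1"
  shows "(\<forall>a2 a3. a2 < q - 1 \<and> a3 < q \<and> a2 + a3 \<ge> q - 1 \<longrightarrow>
            int (card {x \<in> interlude1 n q a2 a3. SR_asymmetric n q x})
              = int q ^ 2 - int q * int a3 - int a2 - 1
            \<and> (\<forall>x \<in> interlude1 n q a2 a3. SR_asymmetric n q x))
       \<and> (\<forall>a3. a3 \<le> q - 2 \<longrightarrow>
            int (card {x \<in> interlude2 n q a3. SR_asymmetric n q x})
              = int q ^ 2 - int q * int a3 - (int q - 1) - 1
            \<and> (\<forall>x \<in> interlude2 n q a3. SR_asymmetric n q x))"
proof -
  have q: "2 \<le> q" using assms(1) by (rule prime_power_ge_2)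
  note count = between_palindromes_SR_asymmetric[OF q assms(2)]
  have interlude1: "int (card {x \<in> interlude1 n q a2 a3. SR_asymmetric n q x})
      = int q ^ 2 - int q * int a3 - int a2 - 1
    \<and> (\<forall>x \<in> interlude1 n q a2 a3. SR_asymmetric n q x)"
    if "a2 < q - 1" "a3 < q" "q - 1 \<le> a2 + a3" for a2 a3
    using count[of a2 a3] that unfolding interlude1_eq_between_palindromes by simp
  have interlude2: "int (card {x \<in> interlude2 n q a3. SR_asymmetric n q x})
      = int q ^ 2 - int q * int a3 - (int q - 1) - 1
    \<and> (\<forall>x \<in> interlude2 n q a3. SR_asymmetric n q x)" if "a3 \<le> q - 2" for a3
  proof -
    have "a3 < q - 1" using that q by linarith
    moreover have "interlude2 n q a3 = between_palindromes n (q^2) ((q - 1) + a3 * q)"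
      using q by (intro interlude2_eq_between_palindromes) simp
    ultimately show ?thesis using count[of "q - 1" a3] q by (simp add: of_nat_diff)
  qed
  show ?thesis using interlude1 interlude2 by blast
qed

end
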